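(* Let $m\ge2$ be an integer and let $A$ be a left brace with $A^{(3)}=A^{m+1}=\{0\}$. Let $a\in A$, and define $a_1=a$ and $a_{j+1}=a*a_j$ for $j\ge1$. Then \[S=\Bigl\{\sum_{k=1}^m t_ka_k\;\Big|\; t_k\in\mathbb{Z},\ 1\le k\le m\Bigr\}\] is the subbrace of $A$ generated by $a$.
   Context: A left brace $(A,+,\cdot)$ is a set $A$ with two binary operations such that $(A,+)$ is an abelian group, $(A,\cdot)$ is a group, and $a(b+c)=ab-a+ac$ for all $a,b,c\in A$. In a left brace, $a*b=-a+ab-b$. For subsets $L,M\subseteq A$, $L*M$ is the subgroup of $(A,+)$ generated by $\{l*m\mid l\in L,m\in M\}$. Set $A^{(1)}=A$, $A^{(r+1)}=A^{(r)}*A$, and $A^1=A$, $A^{r+1}=A*A^r$ for $r\ge1$. A subbrace is a subset that is a subgroup of both $(A,+)$ and $(A,\cdot)$; the subbrace generated by $a$ is the intersection of all subbraces containing $a$. *)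

theory Defs
  imports Main
begin

text \<open>A left brace is modelled on a type 'a whose (abelian) additive group
structure is the type class ab_group_add; the multiplication is a separate
binary operation mul, required to form a group and to satisfy the brace law.\<close>

definition left_brace :: "('a::ab_group_add \<Rightarrow> 'a \<Rightarrow> 'a) \<Rightarrow> bool" where
  "left_brace mul \<longleftrightarrow>
     (\<forall>a b c. mul (mul a b) c = mul a (mul b c)) \<and>
     (\<exists>e. (\<forall>a. mul e a = a \<and> mul a e = a) \<and> (\<forall>a. \<exists>b. mul a b = e \<and> mul b a = e)) \<and>
     (\<forall>a b c. mul a (b + c) = mul a b - a + mul a c)"

definition brace_one :: "('a \<Rightarrow> 'a \<Rightarrow> 'a) \<Rightarrow> 'a" where
  "brace_one mul = (THE e. \<forall>a. mul e a = a \<and> mul a e = a)"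

definition bstar :: "('a::ab_group_add \<Rightarrow> 'a \<Rightarrow> 'a) \<Rightarrow> 'a \<Rightarrow> 'a \<Rightarrow> 'a" where
  "bstar mul a b = - a + mul a b - b"

definition is_add_subgroup :: "'a::ab_group_add set \<Rightarrow> bool" where
  "is_add_subgroup H \<longleftrightarrow> 0 \<in> H \<and> (\<forall>x\<in>H. \<forall>y\<in>H. x + y \<in> H) \<and> (\<forall>x\<in>H. - x \<in> H)"

definition is_mul_subgroup :: "('a \<Rightarrow> 'a \<Rightarrow> 'a) \<Rightarrow> 'a set \<Rightarrow> bool" where
  "is_mul_subgroup mul H \<longleftrightarrow> brace_one mul \<in> H \<and> (\<forall>x\<in>H. \<forall>y\<in>H. mul x y \<in> H) \<and>
     (\<forall>x\<in>H. \<forall>y. mul x y = brace_one mul \<longrightarrow> y \<in> H)"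

definition add_gen :: "'a::ab_group_add set \<Rightarrow> 'a set" where
  "add_gen X = \<Inter>{H. is_add_subgroup H \<and> X \<subseteq> H}"

definition star_set :: "('a::ab_group_add \<Rightarrow> 'a \<Rightarrow> 'a) \<Rightarrow> 'a set \<Rightarrow> 'a set \<Rightarrow> 'a set" where
  "star_set mul L M = add_gen {bstar mul l m | l m. l \<in> L \<and> m \<in> M}"

text \<open>rser mul r = A^(r), lser mul r = A^r, for r >= 1 (index 0 set to A, unused).\<close>
fun rser :: "('a::ab_group_add \<Rightarrow> 'a \<Rightarrow> 'a) \<Rightarrow> nat \<Rightarrow> 'a set" where
  "rser mul 0 = UNIV"
| "rser mul (Suc 0) = UNIV"
| "rser mul (Suc (Suc n)) = star_set mul (rser mul (Suc n)) UNIV"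

fun lser :: "('a::ab_group_add \<Rightarrow> 'a \<Rightarrow> 'a) \<Rightarrow> nat \<Rightarrow> 'a set" where
  "lser mul 0 = UNIV"
| "lser mul (Suc 0) = UNIV"
| "lser mul (Suc (Suc n)) = star_set mul UNIV (lser mul (Suc n))"

definition is_subbrace :: "('a::ab_group_add \<Rightarrow> 'a \<Rightarrow> 'a) \<Rightarrow> 'a set \<Rightarrow> bool" where
  "is_subbrace mul B \<longleftrightarrow> is_add_subgroup B \<and> is_mul_subgroup mul B"

definition subbrace_gen :: "('a::ab_group_add \<Rightarrow> 'a \<Rightarrow> 'a) \<Rightarrow> 'a \<Rightarrow> 'a set" where
  "subbrace_gen mul a = \<Inter>{B. is_subbrace mul B \<and> a \<in> B}"

fun aseq :: "('a::ab_group_add \<Rightarrow> 'a \<Rightarrow> 'a) \<Rightarrow> 'a \<Rightarrow> nat \<Rightarrow> 'a" where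
  "aseq mul a 0 = a"
| "aseq mul a (Suc 0) = a"
| "aseq mul a (Suc (Suc j)) = bstar mul a (aseq mul a (Suc j))"

definition zsmul :: "int \<Rightarrow> 'a::ab_group_add \<Rightarrow> 'a" where
  "zsmul t x = (if 0 \<le> t then ((+) x ^^ nat t) 0 else - (((+) x ^^ nat (- t)) 0))"

end

theory Submission
  imports Defs
begin

text \<open>For each x the map c \<mapsto> x * c is additive, and its k-th iterate takes values in
A^(k+1), so it is nilpotent; in particular a_(m+1) = 0 and S, the additive span of
a_1, ..., a_m, is mapped into itself by c \<mapsto> a * c. Since A^(3) = 0, elements of A * A
act trivially from the left, which yields (x + y) * c = x * c + y * c + x * (y * c). Hence
the x with x * S \<subseteq> S form an additive subgroup (for negation one uses that z + x * z \<in> S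
forces z \<in> S, by nilpotence). This subgroup contains a and all a_k with k \<ge> 2, so
S * S \<subseteq> S, and therefore S is closed under xy = x + y + x * y and under inverses.
Conversely, every subbrace containing a contains a_(j+1) = -a + a a_j - a_j for all j.\<close>

lemma add_funpow_add:
  "((+) x ^^ (p + q)) 0 = ((+) x ^^ p) 0 + ((+) x ^^ q) (0 :: 'a::ab_group_add)"
  by (induction p) (simp_all add: add.assoc)

lemma zsmul_of_nat_diff:
  "zsmul (int p - int q) x = ((+) x ^^ p) 0 - ((+) x ^^ q) (0 :: 'a::ab_group_add)"
proof (cases "q \<le> p")
  case True
  then have "((+) x ^^ p) 0 = ((+) x ^^ (p - q)) 0 + ((+) x ^^ q) 0"
    by (metis add_funpow_add le_add_diff_inverse2)
  moreover have "nat (int p - int q) = p - q" using True by simp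
  ultimately show ?thesis using True by (simp add: zsmul_def)
next
  case False
  then have "((+) x ^^ q) 0 = ((+) x ^^ (q - p)) 0 + ((+) x ^^ p) 0"
    by (metis add_funpow_add le_add_diff_inverse2 nat_le_linear)
  moreover have "nat (- (int p - int q)) = q - p" using False by simp
  ultimately show ?thesis using False by (simp add: zsmul_def)
qed

lemma zsmul_add: "zsmul (s + t) x = zsmul s x + zsmul t (x :: 'a::ab_group_add)"
proof -
  obtain p q p' q' where st: "s = int p - int q" "t = int p' - int q'"
    by (meson int_diff_cases)
  have "s + t = int (p + p') - int (q + q')" using st by simp
  then show ?thesis by (simp only: st zsmul_of_nat_diff) (simp add: add_funpow_add)
qed

lemma zsmul_uminus: "zsmul (- t) x = - zsmul t (x :: 'a::ab_group_add)"
  using zsmul_add[of t "- t" x] by (simp add: zsmul_def eq_neg_iff_add_eq_0 add.commute)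

lemma zsmul_1 [simp]: "zsmul 1 x = x"
  by (simp add: zsmul_def)

lemma zsmul_0 [simp]: "zsmul 0 x = 0"
  by (simp add: zsmul_def)


lemma is_add_subgroup_zero: "is_add_subgroup H \<Longrightarrow> 0 \<in> H"
  by (simp add: is_add_subgroup_def)

lemma is_add_subgroup_add: "is_add_subgroup H \<Longrightarrow> x \<in> H \<Longrightarrow> y \<in> H \<Longrightarrow> x + y \<in> H"
  by (simp add: is_add_subgroup_def)

lemma is_add_subgroup_uminus: "is_add_subgroup H \<Longrightarrow> x \<in> H \<Longrightarrow> - x \<in> H"
  by (simp add: is_add_subgroup_def)

lemma is_add_subgroup_diff: "is_add_subgroup H \<Longrightarrow> x \<in> H \<Longrightarrow> y \<in> H \<Longrightarrow> x - y \<in> H"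
  by (metis diff_conv_add_uminus is_add_subgroup_add is_add_subgroup_uminus)

lemma is_add_subgroup_zsmul: "is_add_subgroup H \<Longrightarrow> x \<in> H \<Longrightarrow> zsmul t x \<in> H"
proof -
  assume H: "is_add_subgroup H" and x: "x \<in> H"
  have "((+) x ^^ n) 0 \<in> H" for n
    by (induction n) (simp_all add: H x is_add_subgroup_zero is_add_subgroup_add)
  then show ?thesis by (simp add: zsmul_def H is_add_subgroup_uminus)
qed

lemma is_add_subgroup_sum:
  "is_add_subgroup H \<Longrightarrow> (\<And>i. i \<in> I \<Longrightarrow> g i \<in> H) \<Longrightarrow> sum g I \<in> H"
  by (induction I rule: infinite_finite_induct)
    (simp_all add: is_add_subgroup_zero is_add_subgroup_add)

lemma is_add_subgroup_vimage:
  assumes additive: "\<And>u v. f (u + v) = f u + f v" and H: "is_add_subgroup H"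
  shows "is_add_subgroup (f -` H)"
proof -
  have f0: "f 0 = 0" using additive[of 0 0] by simp
  have "f (- u) = - f u" for u
    using additive[of u "- u"] by (simp add: f0 eq_neg_iff_add_eq_0 add.commute)
  with f0 H show ?thesis by (simp add: is_add_subgroup_def additive)
qed

definition int_combinations :: "('i \<Rightarrow> 'a::ab_group_add) \<Rightarrow> 'i set \<Rightarrow> 'a set" where
  "int_combinations g I = {x. \<exists>t :: 'i \<Rightarrow> int. x = (\<Sum>i\<in>I. zsmul (t i) (g i))}"

lemma is_add_subgroup_int_combinations: "is_add_subgroup (int_combinations g I)"
proof -
  have "\<exists>u. (\<Sum>i\<in>I. zsmul (t i) (g i)) + (\<Sum>i\<in>I. zsmul (s i) (g i))
          = (\<Sum>i\<in>I. zsmul (u i) (g i))" for t s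
    by (rule exI[of _ "\<lambda>i. t i + s i"]) (simp add: zsmul_add sum.distrib)
  moreover have "\<exists>u. - (\<Sum>i\<in>I. zsmul (t i) (g i)) = (\<Sum>i\<in>I. zsmul (u i) (g i))" for t
    by (rule exI[of _ "\<lambda>i. - t i"]) (simp add: zsmul_uminus sum_negf)
  moreover have "\<exists>t. 0 = (\<Sum>i\<in>I. zsmul (t i) (g i))"
    by (rule exI[of _ "\<lambda>_. 0"]) simp
  ultimately show ?thesis
    unfolding is_add_subgroup_def int_combinations_def by blast
qed

lemma mem_int_combinations:
  assumes "finite I" "i \<in> I"
  shows "g i \<in> int_combinations g I"
proof -
  have "(\<Sum>j\<in>I. zsmul (if j = i then 1 else 0) (g j)) = (\<Sum>j\<in>I. if j = i then g j else 0)"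
    by (rule sum.cong) simp_all
  also have "\<dots> = g i" using assms by simp
  finally show ?thesis unfolding int_combinations_def by (metis (mono_tags) mem_Collect_eq)
qed

lemma int_combinations_subset:
  "is_add_subgroup H \<Longrightarrow> g ` I \<subseteq> H \<Longrightarrow> int_combinations g I \<subseteq> H"
  unfolding int_combinations_def
  by (auto intro!: is_add_subgroup_sum is_add_subgroup_zsmul)


lemma bstar_mem_star_set: "l \<in> L \<Longrightarrow> c \<in> M \<Longrightarrow> bstar mul l c \<in> star_set mul L M"
  unfolding star_set_def add_gen_def by blast

lemma rser_2: "rser mul 2 = star_set mul UNIV UNIV"
  by (simp add: numeral_2_eq_2)

lemma rser_3: "rser mul 3 = star_set mul (rser mul 2) UNIV"
  by (simp add: numeral_3_eq_3 numeral_2_eq_2)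

lemma is_add_subgroup_rser_2: "is_add_subgroup (rser mul 2)"
  by (auto simp: rser_2 star_set_def add_gen_def is_add_subgroup_def)

lemma bstar_mem_rser_2: "bstar mul x y \<in> rser mul 2"
  by (simp add: rser_2 bstar_mem_star_set)

lemma bstar_rser_2_left:
  "rser mul 3 = {0} \<Longrightarrow> w \<in> rser mul 2 \<Longrightarrow> bstar mul w c = 0"
  using bstar_mem_star_set[of w "rser mul 2" c UNIV mul] by (simp add: rser_3)

lemma funpow_bstar_mem_lser: "(bstar mul x ^^ k) z \<in> lser mul (Suc k)"
  by (induction k) (simp_all add: bstar_mem_star_set)

lemma funpow_bstar_eq_0: "lser mul (Suc n) = {0} \<Longrightarrow> (bstar mul x ^^ n) z = 0"
  using funpow_bstar_mem_lser[where k = n and mul = mul and x = x and z = z] by simp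

lemma aseq_Suc_eq_funpow: "aseq mul a (Suc k) = (bstar mul a ^^ k) a"
  by (induction k) simp_all

lemma aseq_mem_rser_2: "2 \<le> k \<Longrightarrow> aseq mul a k \<in> rser mul 2"
proof -
  assume "2 \<le> k"
  then obtain j where "k = Suc (Suc j)" by (metis add_2_eq_Suc le_Suc_ex)
  then show ?thesis by (simp add: bstar_mem_rser_2)
qed

lemma mul_eq_add_bstar: "mul a b = a + b + bstar mul a b"
  by (simp add: bstar_def)

lemma aseq_mem_subbrace: "is_subbrace mul B \<Longrightarrow> a \<in> B \<Longrightarrow> aseq mul a k \<in> B"
proof (induction mul a k rule: aseq.induct)
  case (3 mul a j)
  then have "is_add_subgroup B" "mul a (aseq mul a (Suc j)) \<in> B"
    by (simp_all add: is_subbrace_def is_mul_subgroup_def)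
  with 3 show ?case
    by (simp add: bstar_def is_add_subgroup_add is_add_subgroup_diff is_add_subgroup_uminus)
qed simp_all

locale brace =
  fixes mul :: "'a::ab_group_add \<Rightarrow> 'a \<Rightarrow> 'a"
  assumes left_brace: "left_brace mul"
begin

lemma mul_add_right: "mul a (b + c) = mul a b - a + mul a c"
  using left_brace unfolding left_brace_def by blast

lemma mul_assoc: "mul (mul a b) c = mul a (mul b c)"
  using left_brace unfolding left_brace_def by blast

lemma mul_0_right [simp]: "mul a 0 = a"
  using mul_add_right[of a 0 0] by (simp add: diff_add_eq eq_diff_eq)

lemma mul_0_left [simp]: "mul 0 a = a"
proof -
  obtain e where "\<forall>a. mul e a = a \<and> mul a e = a"
    using left_brace unfolding left_brace_def by blast
  moreover from this have "e = 0" by (metis mul_0_right)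
  ultimately show ?thesis by simp
qed

lemma brace_one_eq_0: "brace_one mul = 0"
  unfolding brace_one_def by (rule the_equality) (simp, metis mul_0_right)

lemma mul_uminus_right: "mul a (- b) = a + a - mul a b"
  using mul_add_right[of a b "- b"] by (simp add: algebra_simps)

lemma bstar_add_right: "bstar mul x (b + c) = bstar mul x b + bstar mul x c"
  by (simp add: bstar_def mul_add_right algebra_simps)

lemma bstar_0_left [simp]: "bstar mul 0 c = 0"
  by (simp add: bstar_def)

lemma bstar_mul_left:
  "bstar mul (mul a b) c = bstar mul a (bstar mul b c) + bstar mul b c + bstar mul a c"
proof -
  have "mul a (- b + mul b c + - c) = mul a (- b) - a + mul a (mul b c) - a + mul a (- c)"
    by (simp only: mul_add_right)
  then show ?thesis by (simp add: bstar_def mul_uminus_right mul_assoc algebra_simps)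
qed

lemma funpow_bstar_add:
  "(bstar mul x ^^ j) (u + v) = (bstar mul x ^^ j) u + (bstar mul x ^^ j) v"
  by (induction j) (simp_all add: bstar_add_right)

text \<open>Descending induction on j, using
  f^j(z) = f^j(z + f(z)) - f^(j+1)(z) for f = (\<lambda>c. x * c).\<close>

lemma mem_of_add_bstar_mem:
  assumes nil: "lser mul (Suc n) = {0}" and H: "is_add_subgroup H"
    and stable: "\<And>c. c \<in> H \<Longrightarrow> bstar mul x c \<in> H"
    and z: "z + bstar mul x z \<in> H"
  shows "z \<in> H"
proof -
  have iter_stable: "(bstar mul x ^^ j) c \<in> H" if "c \<in> H" for c j
    using that by (induction j) (simp_all add: stable)
  have "(bstar mul x ^^ j) z \<in> H" if "j \<le> n" for j
    using that
  proof (induction j rule: inc_induct)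
    case base
    show ?case using funpow_bstar_eq_0[OF nil] is_add_subgroup_zero[OF H] by simp
  next
    case (step j)
    have "(bstar mul x ^^ j) z + (bstar mul x ^^ Suc j) z \<in> H"
      using iter_stable[OF z, of j] by (simp add: funpow_bstar_add funpow_swap1)
    from is_add_subgroup_diff[OF H this step.IH] show ?case by simp
  qed
  from this[of 0] show ?thesis by simp
qed

lemma bstar_add_rser_2_left:
  assumes "rser mul 3 = {0}" "w \<in> rser mul 2"
  shows "bstar mul (w + v) c = bstar mul v c"
proof -
  have "mul w v = w + v"
    using bstar_rser_2_left[OF assms] mul_eq_add_bstar[of mul w v] by simp
  then show ?thesis using bstar_mul_left[of w v c] by (simp add: bstar_rser_2_left[OF assms])
qed

text \<open>a + b = ab - a * b, and a * b \<in> A * A acts trivially from the left.\<close>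

lemma bstar_add_left:
  assumes "rser mul 3 = {0}"
  shows "bstar mul (a + b) c = bstar mul a c + bstar mul b c + bstar mul a (bstar mul b c)"
proof -
  have "a + b = - bstar mul a b + mul a b" by (simp add: bstar_def)
  also have "bstar mul \<dots> c = bstar mul (mul a b) c"
    by (rule bstar_add_rser_2_left[OF assms
          is_add_subgroup_uminus[OF is_add_subgroup_rser_2 bstar_mem_rser_2]])
  finally show ?thesis by (simp add: bstar_mul_left algebra_simps)
qed

lemma is_add_subgroup_bstar_stabilizer:
  assumes r3: "rser mul 3 = {0}" and nil: "lser mul (Suc n) = {0}"
    and H: "is_add_subgroup H"
  shows "is_add_subgroup {x. \<forall>c\<in>H. bstar mul x c \<in> H}"
proof -
  have "bstar mul (x + y) c \<in> H" if "\<forall>c\<in>H. bstar mul x c \<in> H" "\<forall>c\<in>H. bstar mul y c \<in> H" "c \<in> H"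
    for x y c
    using that by (simp add: bstar_add_left[OF r3] is_add_subgroup_add[OF H])
  moreover have "bstar mul (- x) c \<in> H" if x: "\<forall>c\<in>H. bstar mul x c \<in> H" and c: "c \<in> H" for x c
  proof (rule mem_of_add_bstar_mem[OF nil H])
    show "bstar mul x d \<in> H" if "d \<in> H" for d using x that by blast
    have "0 = bstar mul (x + - x) c" by simp
    also have "\<dots> = bstar mul x c + bstar mul (- x) c + bstar mul x (bstar mul (- x) c)"
      by (rule bstar_add_left[OF r3])
    finally have "bstar mul (- x) c + bstar mul x (bstar mul (- x) c) = - bstar mul x c"
      by (simp add: algebra_simps eq_neg_iff_add_eq_0)
    then show "bstar mul (- x) c + bstar mul x (bstar mul (- x) c) \<in> H"
      using x c by (simp add: is_add_subgroup_uminus[OF H])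
  qed
  ultimately show ?thesis
    by (simp add: is_add_subgroup_def is_add_subgroup_zero[OF H])
qed

lemma is_subbrace_if_bstar_closed:
  assumes nil: "lser mul (Suc n) = {0}" and H: "is_add_subgroup H"
    and closed: "\<And>x y. x \<in> H \<Longrightarrow> y \<in> H \<Longrightarrow> bstar mul x y \<in> H"
  shows "is_subbrace mul H"
proof -
  have "mul x y \<in> H" if "x \<in> H" "y \<in> H" for x y
    using that closed by (simp add: mul_eq_add_bstar[of mul x y] is_add_subgroup_add[OF H])
  moreover have "y \<in> H" if x: "x \<in> H" and xy: "mul x y = 0" for x y
  proof (rule mem_of_add_bstar_mem[OF nil H])
    show "bstar mul x c \<in> H" if "c \<in> H" for c using closed x that .
    have "y + bstar mul x y = - x" using xy by (simp add: bstar_def)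
    then show "y + bstar mul x y \<in> H" using is_add_subgroup_uminus[OF H x] by simp
  qed
  ultimately show ?thesis
    using H by (simp add: is_subbrace_def is_mul_subgroup_def brace_one_eq_0 is_add_subgroup_zero)
qed

lemma int_combinations_aseq_bstar_closed:
  assumes r3: "rser mul 3 = {0}" and nil: "lser mul (Suc n) = {0}"
    and x: "x \<in> int_combinations (aseq mul a) {1..n}"
    and c: "c \<in> int_combinations (aseq mul a) {1..n}"
  shows "bstar mul x c \<in> int_combinations (aseq mul a) {1..n}"
proof -
  let ?S = "int_combinations (aseq mul a) {1..n}"
  have S: "is_add_subgroup ?S" by (rule is_add_subgroup_int_combinations)
  have aseq_Suc: "aseq mul a (Suc k) \<in> ?S" if "k \<le> n" for k
  proof (cases "k = n")
    case True
    then show ?thesis using funpow_bstar_eq_0[OF nil] is_add_subgroup_zero[OF S]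
      by (simp add: aseq_Suc_eq_funpow)
  next
    case False
    with that show ?thesis by (simp add: mem_int_combinations)
  qed
  have "?S \<subseteq> bstar mul a -` ?S"
  proof (rule int_combinations_subset[OF is_add_subgroup_vimage[OF bstar_add_right S]])
    show "aseq mul a ` {1..n} \<subseteq> bstar mul a -` ?S"
    proof (rule image_subsetI)
      fix k assume "k \<in> {1..n}"
      then obtain j where "k = Suc j" "j < n" by (cases k) auto
      then show "aseq mul a k \<in> bstar mul a -` ?S"
        using aseq_Suc[of "Suc j"] by (cases j) simp_all
    qed
  qed
  moreover have "?S \<subseteq> {x. \<forall>c\<in>?S. bstar mul x c \<in> ?S}"
  proof (rule int_combinations_subset[OF is_add_subgroup_bstar_stabilizer[OF r3 nil S]])
    show "aseq mul a ` {1..n} \<subseteq> {x. \<forall>c\<in>?S. bstar mul x c \<in> ?S}"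
    proof (intro image_subsetI CollectI ballI)
      fix k d assume "k \<in> {1..n}" "d \<in> ?S"
      show "bstar mul (aseq mul a k) d \<in> ?S"
      proof (cases "k = 1")
        case True
        then show ?thesis using \<open>?S \<subseteq> bstar mul a -` ?S\<close> \<open>d \<in> ?S\<close> by auto
      next
        case False
        then have "bstar mul (aseq mul a k) d = 0"
          using \<open>k \<in> {1..n}\<close> by (intro bstar_rser_2_left[OF r3] aseq_mem_rser_2) simp
        then show ?thesis using is_add_subgroup_zero[OF S] by simp
      qed
    qed
  qed
  ultimately show ?thesis using x c by blast
qed

end

theorem theoremD:
  fixes mul :: "'a::ab_group_add \<Rightarrow> 'a \<Rightarrow> 'a" and m :: nat and a :: 'a
  assumes "m \<ge> 2"
    and "left_brace mul"
    and "rser mul 3 = {0}"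
    and "lser mul (m + 1) = {0}"
  shows "{x. \<exists>t :: nat \<Rightarrow> int. x = (\<Sum>k = 1..m. zsmul (t k) (aseq mul a k))}
           = subbrace_gen mul a"
proof -
  interpret brace mul by (rule brace.intro) (rule assms(2))
  let ?S = "int_combinations (aseq mul a) {1..m}"
  have nil: "lser mul (Suc m) = {0}" using assms(4) by simp
  have "is_subbrace mul ?S"
    by (rule is_subbrace_if_bstar_closed[OF nil is_add_subgroup_int_combinations])
      (rule int_combinations_aseq_bstar_closed[OF assms(3) nil])
  moreover have "a \<in> ?S"
    using mem_int_combinations[of "{1..m}" 1 "aseq mul a"] assms(1) by simp
  moreover have "?S \<subseteq> B" if "is_subbrace mul B" "a \<in> B" for B
    using that aseq_mem_subbrace[of mul B a]
    by (intro int_combinations_subset) (auto simp: is_subbrace_def)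
  ultimately have "subbrace_gen mul a = ?S"
    unfolding subbrace_gen_def by blast
  then show ?thesis by (simp add: int_combinations_def)
qed

end
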